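(* Every equidistributed infinite permutation is aperiodic, i.e. not ultimately periodic.
   Context: An infinite permutation is an equivalence class of sequences $(a[n])_{n\ge0}$ of pairwise distinct reals, where two sequences are equivalent if $a[i]<a[j]\iff b[i]<b[j]$ for all $i,j$; write $\alpha=(\alpha[n])_{n\ge0}$ with the induced order. A sequence $(a[n])$ in $[0,1]$ is equidistributed if $\lim_{n\to\infty}\frac{\#\{0\le i<n:a[i]<t\}}{n}=t$ for each $t\in[0,1]$; a permutation is equidistributed if it has an equidistributed representative in $[0,1]$. A permutation $\alpha$ is ultimately $t$-periodic ($t\ge1$) if for all sufficiently large $i,j$, $\alpha[i]<\alpha[j]\iff\alpha[i+t]<\alpha[j+t]$; it is ultimately periodic if it is ultimately $t$-periodic for some $t$. *)

theory Defs
  imports Complex_Main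
begin

text \<open>An infinite permutation is represented by any of its representatives:
  a sequence of pairwise distinct reals. Two representatives are equivalent
  iff they induce the same order on the index set.\<close>

definition perm_equiv :: "(nat \<Rightarrow> real) \<Rightarrow> (nat \<Rightarrow> real) \<Rightarrow> bool" where
  "perm_equiv a b \<longleftrightarrow> (\<forall>i j. a i < a j \<longleftrightarrow> b i < b j)"

definition equidistributed_seq :: "(nat \<Rightarrow> real) \<Rightarrow> bool" where
  "equidistributed_seq a \<longleftrightarrow> (\<forall>n. a n \<in> {0..1}) \<and>
     (\<forall>t\<in>{0..1}. (\<lambda>n. real (card {i. i < n \<and> a i < t}) / real n) \<longlonglongrightarrow> t)"

definition equidistributed_perm :: "(nat \<Rightarrow> real) \<Rightarrow> bool" where
  "equidistributed_perm a \<longleftrightarrow>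
     (\<exists>b. inj b \<and> perm_equiv a b \<and> equidistributed_seq b)"

definition ult_t_periodic :: "nat \<Rightarrow> (nat \<Rightarrow> real) \<Rightarrow> bool" where
  "ult_t_periodic t a \<longleftrightarrow>
     (\<exists>N. \<forall>i j. N \<le> i \<longrightarrow> N \<le> j \<longrightarrow> (a i < a j \<longleftrightarrow> a (i + t) < a (j + t)))"

definition ult_periodic :: "(nat \<Rightarrow> real) \<Rightarrow> bool" where
  "ult_periodic a \<longleftrightarrow> (\<exists>t\<ge>1. ult_t_periodic t a)"

end

theory Submission
  imports Defs
begin

text \<open>Ultimate \<open>t\<close>-periodicity forces every residue class \<open>i, i + t, i + 2t, \<dots>\<close> (for large \<open>i\<close>)
  to be monotone in any representative, hence convergent when the representative is bounded: the
  sequence eventually clusters around at most \<open>t\<close> limit points. An equidistributed sequence must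
  visit every subinterval of \<open>[0,1]\<close> with positive frequency, in particular one lying at positive
  distance from these limit points, which is impossible.\<close>

lemma perm_equiv_ult_t_periodic:
  assumes "perm_equiv a b"
  shows "ult_t_periodic t a \<longleftrightarrow> ult_t_periodic t b"
  using assms unfolding perm_equiv_def ult_t_periodic_def by simp

lemma ult_t_periodic_monoseq:
  fixes b :: "nat \<Rightarrow> real"
  assumes per: "\<And>i j. N \<le> i \<Longrightarrow> N \<le> j \<Longrightarrow> (b i < b j \<longleftrightarrow> b (i + t) < b (j + t))"
    and "N \<le> i"
  shows "monoseq (\<lambda>k. b (i + k * t))"
proof -
  have step: "b (i + k * t) < b (i + Suc k * t) \<longleftrightarrow> b (i + Suc k * t) < b (i + Suc (Suc k) * t)" for k
    using per[of "i + k * t" "i + Suc k * t"] \<open>N \<le> i\<close> by (simp add: algebra_simps)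
  have same_direction: "b (i + k * t) < b (i + Suc k * t) \<longleftrightarrow> b i < b (i + t)" for k
    by (induction k) (use step in auto)
  show ?thesis
    unfolding monoseq_Suc using same_direction
    by (cases "b i < b (i + t)") (auto intro: less_imp_le simp: not_less)
qed

lemma eventually_near_interleaved_limits:
  fixes b :: "nat \<Rightarrow> real"
  assumes lim: "\<And>r. r < t \<Longrightarrow> (\<lambda>k. b (N + r + k * t)) \<longlonglongrightarrow> L r"
    and "t \<ge> 1" "e > 0"
  shows "\<forall>\<^sub>F i in sequentially. \<exists>r<t. \<bar>b i - L r\<bar> < e"
proof -
  have "\<forall>\<^sub>F k in sequentially. \<forall>r\<in>{..<t}. dist (b (N + r + k * t)) (L r) < e"
    using lim \<open>e > 0\<close> by (intro eventually_ball_finite ballI tendstoD) auto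
  then obtain K where K: "\<And>k r. K \<le> k \<Longrightarrow> r < t \<Longrightarrow> \<bar>b (N + r + k * t) - L r\<bar> < e"
    unfolding eventually_sequentially dist_real_def by blast
  have "\<exists>r<t. \<bar>b i - L r\<bar> < e" if "N + K * t \<le> i" for i
  proof -
    define r k where "r = (i - N) mod t" and "k = (i - N) div t"
    have "i = N + r + k * t"
      using \<open>N + K * t \<le> i\<close> unfolding r_def k_def by simp
    moreover have "K \<le> k"
      using div_le_mono[of "K * t" "i - N" t] \<open>N + K * t \<le> i\<close> \<open>t \<ge> 1\<close> unfolding k_def by simp
    moreover have "r < t"
      using \<open>t \<ge> 1\<close> unfolding r_def by simp
    ultimately show ?thesis
      using K[of k r] by blast
  qed
  then show ?thesis
    unfolding eventually_sequentially by blast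
qed

lemma ult_t_periodic_clusters_finite:
  fixes b :: "nat \<Rightarrow> real"
  assumes "ult_t_periodic t b" "t \<ge> 1" "Bseq b"
  obtains S where "finite S" "\<And>e. e > 0 \<Longrightarrow> \<forall>\<^sub>F i in sequentially. \<exists>s\<in>S. \<bar>b i - s\<bar> < e"
proof -
  obtain N where per: "\<And>i j. N \<le> i \<Longrightarrow> N \<le> j \<Longrightarrow> (b i < b j \<longleftrightarrow> b (i + t) < b (j + t))"
    using assms(1) unfolding ult_t_periodic_def by blast
  define L where "L r = lim (\<lambda>k. b (N + r + k * t))" for r
  have lim_L: "(\<lambda>k. b (N + r + k * t)) \<longlonglongrightarrow> L r" for r
  proof -
    have "convergent (\<lambda>k. b (N + r + k * t))"
      using ult_t_periodic_monoseq[of N b t "N + r", OF per] Bseq_subseq[OF \<open>Bseq b\<close>]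
      by (intro Bseq_monoseq_convergent) auto
    then show ?thesis
      unfolding L_def by (simp add: convergent_LIMSEQ_iff)
  qed
  have "\<forall>\<^sub>F i in sequentially. \<exists>s\<in>L ` {..<t}. \<bar>b i - s\<bar> < e" if "e > 0" for e
    using eventually_near_interleaved_limits[of t b N L e] lim_L \<open>t \<ge> 1\<close> that
    by (auto elim!: eventually_mono)
  then show ?thesis
    using that[of "L ` {..<t}"] by simp
qed

lemma equidistributed_seq_frequently_in_interval:
  assumes "equidistributed_seq b" "0 \<le> u" "u < v" "v \<le> 1"
  shows "\<exists>\<^sub>F i in sequentially. u \<le> b i \<and> b i < v"
proof (rule ccontr)
  assume "\<not> ?thesis"
  then obtain M where outside: "\<And>i. M \<le> i \<Longrightarrow> \<not> (u \<le> b i \<and> b i < v)"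
    unfolding not_frequently eventually_sequentially by blast
  define count where "count s n = real (card {i. i < n \<and> b i < s})" for s n
  have count_gap: "(count v n - count u n) / real n \<le> real M / real n" for n
  proof -
    have "{i. i < n \<and> b i < v} \<subseteq> {i. i < n \<and> b i < u} \<union> {..<M}"
      using outside by (auto simp: not_le) (meson not_le)
    then have "card {i. i < n \<and> b i < v} \<le> card ({i. i < n \<and> b i < u} \<union> {..<M})"
      by (intro card_mono) auto
    also have "\<dots> \<le> card {i. i < n \<and> b i < u} + M"
      using card_Un_le[of "{i. i < n \<and> b i < u}" "{..<M}"] by simp
    finally show ?thesis
      unfolding count_def by (simp add: divide_right_mono)
  qed
  have "(\<lambda>n. count s n / real n) \<longlonglongrightarrow> s" if "s \<in> {0..1}" for s
    using assms(1) that unfolding equidistributed_seq_def count_def by blast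
  then have "(\<lambda>n. (count v n - count u n) / real n) \<longlonglongrightarrow> v - u"
    using assms(2-4) by (simp add: diff_divide_distrib tendsto_diff)
  then have "v - u \<le> 0"
    using count_gap by (intro LIMSEQ_le[OF _ lim_const_over_n[of "real M"]]) auto
  with \<open>u < v\<close> show False by simp
qed

lemma unit_interval_gap_of_finite:
  fixes S :: "real set"
  assumes "finite S"
  obtains x e where "e > 0" "\<And>y. \<bar>y - x\<bar> < e \<Longrightarrow> y \<in> {0<..<1} - S"
proof -
  have "infinite ({0<..<1::real} - S)"
    using assms by (simp add: infinite_Ioo)
  then obtain x where "x \<in> {0<..<1::real} - S"
    using infinite_imp_nonempty by blast
  moreover have "open ({0<..<1::real} - S)"
    using assms by (intro open_Diff finite_imp_closed) auto
  ultimately obtain e where "e > 0" "\<And>y. dist y x < e \<Longrightarrow> y \<in> {0<..<1} - S"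
    unfolding open_dist by blast
  then show ?thesis
    using that[of e x] by (simp add: dist_real_def)
qed

lemma clusters_finite_eventually_avoids_interval:
  fixes b :: "nat \<Rightarrow> real"
  assumes "finite S"
    and clusters: "\<And>e. e > 0 \<Longrightarrow> \<forall>\<^sub>F i in sequentially. \<exists>s\<in>S. \<bar>b i - s\<bar> < e"
  obtains u v where "0 \<le> u" "u < v" "v \<le> 1" "\<forall>\<^sub>F i in sequentially. \<not> (u \<le> b i \<and> b i < v)"
proof -
  obtain x e where "e > 0" and gap: "\<And>y. \<bar>y - x\<bar> < e \<Longrightarrow> y \<in> {0<..<1} - S"
    using unit_interval_gap_of_finite[OF \<open>finite S\<close>] by blast
  have "\<forall>\<^sub>F i in sequentially. \<exists>s\<in>S. \<bar>b i - s\<bar> < e/2"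
    using clusters[of "e/2"] \<open>e > 0\<close> by simp
  then have "\<forall>\<^sub>F i in sequentially. \<not> (x - e/2 \<le> b i \<and> b i < x + e/2)"
  proof (rule eventually_mono)
    fix i
    assume "\<exists>s\<in>S. \<bar>b i - s\<bar> < e/2"
    then obtain s where "s \<in> S" "\<bar>b i - s\<bar> < e/2" by blast
    show "\<not> (x - e/2 \<le> b i \<and> b i < x + e/2)"
    proof
      assume "x - e/2 \<le> b i \<and> b i < x + e/2"
      with \<open>\<bar>b i - s\<bar> < e/2\<close> have "\<bar>s - x\<bar> < e" by arith
      with gap \<open>s \<in> S\<close> show False by blast
    qed
  qed
  moreover have "0 \<le> x - e/2" "x + e/2 \<le> 1"
    using gap[of "x - e/2"] gap[of "x + e/2"] \<open>e > 0\<close> by auto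
  ultimately show ?thesis
    using that[of "x - e/2" "x + e/2"] \<open>e > 0\<close> by simp
qed

theorem corollary1:
  fixes a :: "nat \<Rightarrow> real"
  assumes "inj a"
    and "equidistributed_perm a"
  shows "\<not> ult_periodic a"
proof
  assume "ult_periodic a"
  then obtain t where "t \<ge> 1" "ult_t_periodic t a"
    unfolding ult_periodic_def by blast
  from assms(2) obtain b where "perm_equiv a b" and equi: "equidistributed_seq b"
    unfolding equidistributed_perm_def by blast
  have "Bseq b"
    using equi unfolding equidistributed_seq_def by (intro BseqI'[of _ 1]) (auto simp: abs_le_iff)
  moreover have "ult_t_periodic t b"
    using \<open>ult_t_periodic t a\<close> \<open>perm_equiv a b\<close> perm_equiv_ult_t_periodic by blast
  ultimately obtain S where "finite S"
    and "\<And>e. e > 0 \<Longrightarrow> \<forall>\<^sub>F i in sequentially. \<exists>s\<in>S. \<bar>b i - s\<bar> < e"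
    using ult_t_periodic_clusters_finite \<open>t \<ge> 1\<close> by blast
  then obtain u v where "0 \<le> u" "u < v" "v \<le> 1"
    and avoids: "\<forall>\<^sub>F i in sequentially. \<not> (u \<le> b i \<and> b i < v)"
    by (rule clusters_finite_eventually_avoids_interval)
  moreover have "\<exists>\<^sub>F i in sequentially. u \<le> b i \<and> b i < v"
    using equidistributed_seq_frequently_in_interval[OF equi] \<open>0 \<le> u\<close> \<open>u < v\<close> \<open>v \<le> 1\<close> .
  ultimately show False
    by (simp add: frequently_def)
qed

end
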